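(* Let $L(x)\in\mathbb{F}_{p^r}[x]$ be an additive polynomial and $A(x)\in\mathbb{F}_{p^r}[x]$. The following are equivalent: (i) $A(L(x))$ is an Alltop polynomial; (ii) $L(A(x))$ is an Alltop polynomial; (iii) $A(x)$ is an Alltop polynomial and $L(x)$ is a permutation polynomial of $\mathbb{F}_{p^r}$.
   Context: For $f:\mathbb{F}_{p^r}\to\mathbb{F}_{p^r}$ and $a\in\mathbb{F}_{p^r}$, $\Delta_{f,a}(x)=f(x+a)-f(x)$. A function $f$ is planar if for every $a\in\mathbb{F}_{p^r}^*$ the map $x\mapsto\Delta_{f,a}(x)$ is a bijection. A polynomial $A$ is an Alltop polynomial (function) if $\Delta_{A,a}$ is planar for every $a\in\mathbb{F}_{p^r}^*$. A polynomial $L$ is additive if $L(x+y)=L(x)+L(y)$ for all $x,y\in\mathbb{F}_{p^r}$. A permutation polynomial is one inducing a bijection of $\mathbb{F}_{p^r}$. *)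

theory Defs
  imports "HOL-Computational_Algebra.Polynomial"
begin

text \<open>Functions on a finite field (any finite field is some F_{p^r}).\<close>

definition diff_op :: "('a::ring \<Rightarrow> 'a) \<Rightarrow> 'a \<Rightarrow> 'a \<Rightarrow> 'a" where
  "diff_op f a = (\<lambda>x. f (x + a) - f x)"

definition planar :: "('a::ring \<Rightarrow> 'a) \<Rightarrow> bool" where
  "planar f \<longleftrightarrow> (\<forall>a. a \<noteq> 0 \<longrightarrow> bij (diff_op f a))"

definition alltop :: "('a::ring \<Rightarrow> 'a) \<Rightarrow> bool" where
  "alltop A \<longleftrightarrow> (\<forall>a. a \<noteq> 0 \<longrightarrow> planar (diff_op A a))"

definition additive_poly :: "'a::comm_ring poly \<Rightarrow> bool" where
  "additive_poly L \<longleftrightarrow> (\<forall>x y. poly L (x + y) = poly L x + poly L y)"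

definition permutation_poly :: "'a::comm_ring poly \<Rightarrow> bool" where
  "permutation_poly L \<longleftrightarrow> bij (poly L)"

end

theory Submission
  imports Defs
begin

text \<open>For additive L the difference of A \<circ> L in direction a is the difference of A in
  direction L a precomposed with L, and the difference of L \<circ> A is L after the difference of A.
  So if L is bijective, both compositions are Alltop exactly when A is. Otherwise, on a finite
  field, L is neither injective nor surjective; but a bijective second difference of A \<circ> L
  factors through L, and one of L \<circ> A takes values in the image of L.\<close>

lemma alltop_iff_second_differences:
  "alltop f \<longleftrightarrow> (\<forall>a b. a \<noteq> 0 \<longrightarrow> b \<noteq> 0 \<longrightarrow> bij (diff_op (diff_op f a) b))"
  unfolding alltop_def planar_def by blast

lemma diff_op_comp_additive_right:
  fixes l :: "'a::ring \<Rightarrow> 'a"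
  assumes "additive l"
  shows "diff_op (f \<circ> l) a = diff_op f (l a) \<circ> l"
  using additive.add[OF assms] by (simp add: diff_op_def fun_eq_iff)

lemma diff_op_comp_additive_left:
  fixes l :: "'a::ring \<Rightarrow> 'a"
  assumes "additive l"
  shows "diff_op (l \<circ> f) a = l \<circ> diff_op f a"
  using additive.diff[OF assms] by (simp add: diff_op_def fun_eq_iff)

lemma all_nonzero_bij_iff:
  fixes l :: "'a::zero \<Rightarrow> 'b::zero"
  assumes "bij l" "l 0 = 0"
  shows "(\<forall>a. a \<noteq> 0 \<longrightarrow> P (l a)) \<longleftrightarrow> (\<forall>c. c \<noteq> 0 \<longrightarrow> P c)"
  using assms by (metis bij_pointE)

lemma alltop_comp_additive_bij_right:
  fixes l :: "'a::ring \<Rightarrow> 'a"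
  assumes "additive l" "bij l"
  shows "alltop (f \<circ> l) \<longleftrightarrow> alltop f"
proof -
  have "bij (g \<circ> l) \<longleftrightarrow> bij g" for g :: "'a \<Rightarrow> 'a"
    using bij_betw_comp_iff[OF \<open>bij l\<close>] by blast
  then have "alltop (f \<circ> l) \<longleftrightarrow>
      (\<forall>a. a \<noteq> 0 \<longrightarrow> (\<forall>b. b \<noteq> 0 \<longrightarrow> bij (diff_op (diff_op f (l a)) (l b))))"
    by (simp add: alltop_iff_second_differences diff_op_comp_additive_right[OF assms(1)])
  also have "\<dots> \<longleftrightarrow> alltop f"
  proof -
    note transport = all_nonzero_bij_iff[OF \<open>bij l\<close> additive.zero[OF assms(1)]]
    have "(\<forall>b. b \<noteq> 0 \<longrightarrow> bij (diff_op g (l b))) \<longleftrightarrow> (\<forall>b. b \<noteq> 0 \<longrightarrow> bij (diff_op g b))"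
      for g :: "'a \<Rightarrow> 'a"
      by (rule transport)
    then show ?thesis
      using transport[of "\<lambda>c. \<forall>b. b \<noteq> 0 \<longrightarrow> bij (diff_op (diff_op f c) b)"]
      by (simp add: alltop_iff_second_differences)
  qed
  finally show ?thesis .
qed

lemma alltop_comp_additive_bij_left:
  fixes l :: "'a::ring \<Rightarrow> 'a"
  assumes "additive l" "bij l"
  shows "alltop (l \<circ> f) \<longleftrightarrow> alltop f"
proof -
  have "bij (l \<circ> g) \<longleftrightarrow> bij g" for g :: "'a \<Rightarrow> 'a"
    using bij_betw_comp_iff2[OF \<open>bij l\<close>, of g UNIV] by simp
  then show ?thesis
    by (simp add: alltop_iff_second_differences diff_op_comp_additive_left[OF assms(1)])
qed

lemma alltop_comp_additive_right_imp_inj: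
  fixes l :: "'a::{ring_1, zero_neq_one} \<Rightarrow> 'a"
  assumes "additive l" "alltop (f \<circ> l)"
  shows "inj l"
proof -
  have "bij (diff_op (diff_op (f \<circ> l) 1) 1)"
    using assms(2) by (simp add: alltop_iff_second_differences)
  then have "inj (diff_op (diff_op f (l 1)) (l 1) \<circ> l)"
    unfolding diff_op_comp_additive_right[OF assms(1)] by (rule bij_is_inj)
  then show "inj l" by (rule inj_on_imageI2)
qed

lemma alltop_comp_additive_left_imp_surj:
  fixes l :: "'a::{ring_1, zero_neq_one} \<Rightarrow> 'a"
  assumes "additive l" "alltop (l \<circ> f)"
  shows "surj l"
proof -
  have "bij (diff_op (diff_op (l \<circ> f) 1) 1)"
    using assms(2) by (simp add: alltop_iff_second_differences)
  then have "surj (l \<circ> diff_op (diff_op f 1) 1)"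
    unfolding diff_op_comp_additive_left[OF assms(1)] by (rule bij_is_surj)
  then show "surj l" by (auto simp: surj_def)
qed

theorem lemma4:
  fixes L A :: "'a::{finite, field} poly"
  assumes "additive_poly L"
  shows "(alltop (poly (pcompose A L)) \<longleftrightarrow> alltop (poly (pcompose L A)))
       \<and> (alltop (poly (pcompose L A)) \<longleftrightarrow> alltop (poly A) \<and> permutation_poly L)"
proof -
  have add: "additive (poly L)"
    using assms by (simp add: additive_poly_def additive_def)
  have "poly (pcompose A L) = poly A \<circ> poly L" "poly (pcompose L A) = poly L \<circ> poly A"
    by (simp_all add: fun_eq_iff poly_pcompose)
  moreover have "(alltop (poly A \<circ> poly L) \<longleftrightarrow> alltop (poly L \<circ> poly A))
      \<and> (alltop (poly L \<circ> poly A) \<longleftrightarrow> alltop (poly A) \<and> bij (poly L))"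
  proof (cases "bij (poly L)")
    case True
    then show ?thesis
      by (simp add: alltop_comp_additive_bij_right[OF add] alltop_comp_additive_bij_left[OF add])
  next
    case False
    then have "\<not> inj (poly L)" "\<not> surj (poly L)"
      using finite_UNIV_inj_surj[OF finite_UNIV, of "poly L"]
        finite_UNIV_surj_inj[OF finite_UNIV, of "poly L"]
      by (auto simp: bij_def)
    then show ?thesis
      using False alltop_comp_additive_right_imp_inj[OF add] alltop_comp_additive_left_imp_surj[OF add]
      by blast
  qed
  ultimately show ?thesis
    by (simp add: permutation_poly_def)
qed

end
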